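(* There is a partition $\{B_\xi:\xi<\mathfrak c\}$ of $\mathbb R$ into Bernstein sets such that for every $\xi<\mathfrak c$ the set $B_\xi$ is a ${<}\operatorname{cf}(\mathfrak c)$-covering.
   Context: $\mathfrak c=|\mathbb R|$ and $\operatorname{cf}$ denotes cofinality. A set $B\subseteq\mathbb R$ is a Bernstein set if for every uncountable Borel set $Z\subseteq\mathbb R$ both $Z\cap B$ and $Z\setminus B$ are nonempty. A set $A\subseteq\mathbb R$ is a ${<}\kappa$-covering if for every $B\subseteq\mathbb R$ with $|B|<\kappa$ there is $x\in\mathbb R$ with $B+x\subseteq A$. *)

theory Defs
  imports "HOL-Analysis.Analysis"
begin

definition Bernstein :: "real set \<Rightarrow> bool" where
  "Bernstein B \<equiv> \<forall>Z. Z \<in> sets borel \<and> uncountable Z \<longrightarrow> Z \<inter> B \<noteq> {} \<and> Z - B \<noteq> {}"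

text \<open>The well-order card_of UNIV on the reals is a cardinal (initial) well-order of
  order type continuum; cf(continuum) is the least cardinality of a cofinal subset of it.
  A set X has cardinality less than cf(continuum) iff it is strictly smaller than
  every cofinal subset.\<close>
definition less_cf_continuum :: "real set \<Rightarrow> bool" where
  "less_cf_continuum X \<equiv>
     \<forall>A. cofinal A (card_of (UNIV :: real set)) \<longrightarrow> (card_of X, card_of A) \<in> ordLess"

definition lt_covering_cf_c :: "real set \<Rightarrow> bool" where
  "lt_covering_cf_c A \<equiv> \<forall>B. less_cf_continuum B \<longrightarrow> (\<exists>x. (\<lambda>b. b + x) ` B \<subseteq> A)"

end

theory Submission
  imports Defs "HOL-Library.Sublist"
begin

text \<open>Well-order \<open>\<real>\<close> in the order type \<open>c\<close> of the continuum and list, each of them \<open>c\<close>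
  times, the tasks ``put a point of the perfect set \<open>P\<close> into \<open>B \<xi>\<close>'' and ``put a translate
  of the initial segment below \<open>\<alpha>\<close> into \<open>B \<xi>\<close>''. Treating the tasks by transfinite
  recursion, each stage adds at most as many reals as it has predecessors, so fewer than \<open>c\<close>
  reals are used before it and the new ones can be chosen disjoint from them. Every
  uncountable Borel set contains a perfect set, and these are coded by only \<open>c\<close> trees of
  reals; hence each \<open>B \<xi>\<close> meets every uncountable Borel set, and so does its complement, which
  contains \<open>B (\<xi> + 1)\<close>. A set of fewer than \<open>cf c\<close> reals is not cofinal, so it lies in an
  initial segment, a translate of which lies in \<open>B \<xi>\<close>. The perfect set theorem is obtained
  through Suslin's analytic sets, which contain the Borel sets and, when uncountable, the
  branches of a Cantor scheme.\<close>

unbundle cardinal_syntax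

section \<open>Analytic sets\<close>

definition cylinder :: "nat list \<Rightarrow> (nat \<Rightarrow> nat) set" where
  "cylinder s = {x. \<forall>i<length s. x i = s ! i}"

definition baire_closed :: "(nat \<Rightarrow> nat) set \<Rightarrow> bool" where
  "baire_closed C \<longleftrightarrow> (\<forall>x. (\<forall>n. \<exists>y\<in>C. \<forall>i<n. y i = x i) \<longrightarrow> x \<in> C)"

definition baire_continuous_on :: "(nat \<Rightarrow> nat) set \<Rightarrow> ((nat \<Rightarrow> nat) \<Rightarrow> real) \<Rightarrow> bool" where
  "baire_continuous_on C f \<longleftrightarrow>
     (\<forall>x\<in>C. \<forall>e>0. \<exists>n. \<forall>y\<in>C. (\<forall>i<n. y i = x i) \<longrightarrow> \<bar>f y - f x\<bar> < e)"

text \<open>Suslin's analytic sets: continuous images of closed subsets of the Baire space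
  \<open>\<nat>\<^sup>\<nat>\<close>, whose product topology is spelled out through agreement on initial segments.\<close>
definition analytic_set :: "real set \<Rightarrow> bool" where
  "analytic_set A \<longleftrightarrow> (\<exists>C f. baire_closed C \<and> baire_continuous_on C f \<and> A = f ` C)"

lemma analytic_set_empty: "analytic_set {}"
  unfolding analytic_set_def baire_closed_def baire_continuous_on_def
  by (rule exI[of _ "{}"]) auto

lemma analytic_set_translation:
  assumes "analytic_set A" shows "analytic_set ((\<lambda>x. x + d) ` A)"
proof -
  obtain C f where "baire_closed C" "baire_continuous_on C f" "A = f ` C"
    using assms unfolding analytic_set_def by blast
  moreover have "baire_continuous_on C (\<lambda>x. f x + d)"
    using \<open>baire_continuous_on C f\<close> unfolding baire_continuous_on_def by simp
  moreover have "(\<lambda>x. x + d) ` A = (\<lambda>x. f x + d) ` C" using \<open>A = f ` C\<close> by auto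
  ultimately show ?thesis unfolding analytic_set_def by blast
qed

lemma analytic_set_family:
  assumes "\<And>n::nat. analytic_set (A n)"
  shows "\<exists>Cs fs. \<forall>n. baire_closed (Cs n) \<and> baire_continuous_on (Cs n) (fs n) \<and> A n = fs n ` Cs n"
proof -
  have "\<forall>n. \<exists>p. baire_closed (fst p) \<and> baire_continuous_on (fst p) (snd p) \<and> A n = snd p ` fst p"
    using assms unfolding analytic_set_def by fastforce
  from choice[OF this] obtain p where "\<forall>n. baire_closed (fst (p n)) \<and>
      baire_continuous_on (fst (p n)) (snd (p n)) \<and> A n = snd (p n) ` fst (p n)" ..
  then show ?thesis by (intro exI[of _ "\<lambda>n. fst (p n)"] exI[of _ "\<lambda>n. snd (p n)"])
qed

lemma analytic_set_UN:
  assumes "\<And>n::nat. analytic_set (A n)" shows "analytic_set (\<Union>n. A n)"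
proof -
  obtain Cs fs where closed: "\<And>n. baire_closed (Cs n)"
    and cont: "\<And>n. baire_continuous_on (Cs n) (fs n)" and img: "\<And>n. A n = fs n ` Cs n"
    using analytic_set_family[of A] assms by blast
  \<comment> \<open>the first coordinate selects the piece, the remaining ones a point of it\<close>
  define tl_seq :: "(nat \<Rightarrow> nat) \<Rightarrow> nat \<Rightarrow> nat" where "tl_seq x = (\<lambda>i. x (Suc i))" for x
  define C where "C = {x. tl_seq x \<in> Cs (x 0)}"
  define f where "f x = fs (x 0) (tl_seq x)" for x
  have tl_agree: "\<forall>i<m. tl_seq y i = tl_seq x i" if "\<forall>i<Suc m. y i = x i" for x y :: "nat \<Rightarrow> nat" and m
    using that unfolding tl_seq_def by simp
  have "baire_closed C" unfolding baire_closed_def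
  proof (intro allI impI)
    fix x assume approx: "\<forall>n. \<exists>y\<in>C. \<forall>i<n. y i = x i"
    have "\<exists>y\<in>Cs (x 0). \<forall>i<m. y i = tl_seq x i" for m
    proof -
      obtain y where y: "y \<in> C" "\<forall>i<Suc m. y i = x i" using approx by blast
      then have "tl_seq y \<in> Cs (x 0)" unfolding C_def by simp
      then show ?thesis using tl_agree[OF y(2)] by blast
    qed
    then show "x \<in> C" using closed[of "x 0"] unfolding baire_closed_def C_def by blast
  qed
  moreover have "baire_continuous_on C f" unfolding baire_continuous_on_def
  proof (intro ballI allI impI)
    fix x :: "nat \<Rightarrow> nat" and e :: real assume "x \<in> C" "e > 0"
    then obtain m where m: "\<forall>y\<in>Cs (x 0). (\<forall>i<m. y i = tl_seq x i) \<longrightarrow>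
        \<bar>fs (x 0) y - fs (x 0) (tl_seq x)\<bar> < e"
      using cont[of "x 0"] unfolding baire_continuous_on_def C_def by blast
    show "\<exists>n. \<forall>y\<in>C. (\<forall>i<n. y i = x i) \<longrightarrow> \<bar>f y - f x\<bar> < e"
    proof (intro exI[of _ "Suc m"] ballI impI)
      fix y assume y: "y \<in> C" "\<forall>i<Suc m. y i = x i"
      then have "y 0 = x 0" by simp
      with y show "\<bar>f y - f x\<bar> < e" using m tl_agree[OF y(2)] unfolding f_def C_def by simp
    qed
  qed
  moreover have "(\<Union>n. A n) = f ` C"
  proof
    show "f ` C \<subseteq> (\<Union>n. A n)" unfolding f_def C_def img by auto
    show "(\<Union>n. A n) \<subseteq> f ` C"
    proof
      fix z assume "z \<in> (\<Union>n. A n)"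
      then obtain n w where "w \<in> Cs n" "z = fs n w" using img by blast
      moreover have "tl_seq (case_nat n w) = w" unfolding tl_seq_def by simp
      ultimately show "z \<in> f ` C" unfolding C_def f_def by (auto intro!: image_eqI[of _ _ "case_nat n w"])
    qed
  qed
  ultimately show ?thesis unfolding analytic_set_def by blast
qed

lemma baire_closed_INT:
  assumes "\<And>k::nat. baire_closed (C k)" shows "baire_closed (\<Inter>k. C k)"
  unfolding baire_closed_def
proof (intro allI impI)
  fix x assume approx: "\<forall>n. \<exists>y\<in>\<Inter>k. C k. \<forall>i<n. y i = x i"
  have "x \<in> C k" for k
  proof -
    from approx have "\<forall>n. \<exists>y\<in>C k. \<forall>i<n. y i = x i" by blast
    then show ?thesis using assms[of k] unfolding baire_closed_def by blast
  qed
  then show "x \<in> (\<Inter>k. C k)" by blast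
qed

lemma baire_closed_equalizer:
  assumes "baire_closed C" "baire_continuous_on C f" "baire_continuous_on C g"
  shows "baire_closed {x\<in>C. f x = g x}"
  unfolding baire_closed_def
proof (intro allI impI)
  fix x assume approx: "\<forall>n. \<exists>y\<in>{x\<in>C. f x = g x}. \<forall>i<n. y i = x i"
  then have "\<forall>n. \<exists>y\<in>C. \<forall>i<n. y i = x i" by blast
  then have "x \<in> C" using assms(1) unfolding baire_closed_def by blast
  have "f x = g x"
  proof (rule ccontr)
    assume "f x \<noteq> g x"
    define e where "e = \<bar>f x - g x\<bar> / 2"
    have "e > 0" using \<open>f x \<noteq> g x\<close> unfolding e_def by simp
    obtain n1 where n1: "\<forall>y\<in>C. (\<forall>i<n1. y i = x i) \<longrightarrow> \<bar>f y - f x\<bar> < e"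
      using assms(2)[unfolded baire_continuous_on_def, rule_format, OF \<open>x \<in> C\<close> \<open>e > 0\<close>] by blast
    obtain n2 where n2: "\<forall>y\<in>C. (\<forall>i<n2. y i = x i) \<longrightarrow> \<bar>g y - g x\<bar> < e"
      using assms(3)[unfolded baire_continuous_on_def, rule_format, OF \<open>x \<in> C\<close> \<open>e > 0\<close>] by blast
    obtain y where "y \<in> C" "f y = g y" "\<forall>i<max n1 n2. y i = x i" using approx by blast
    then have "\<bar>f y - f x\<bar> < e" "\<bar>g y - g x\<bar> < e" "f y = g y" using n1 n2 by auto
    then show False unfolding e_def by (simp add: abs_if split: if_splits)
  qed
  with \<open>x \<in> C\<close> show "x \<in> {x\<in>C. f x = g x}" by blast
qed

lemma baire_closed_vimage:
  assumes "baire_closed D"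
    and \<phi>: "\<And>m. \<exists>N. \<forall>x y. (\<forall>j<N. y j = x j) \<longrightarrow> (\<forall>i<m. \<phi> y i = \<phi> x i)"
  shows "baire_closed (\<phi> -` D)"
  unfolding baire_closed_def
proof (intro allI impI)
  fix x assume approx: "\<forall>n. \<exists>y\<in>\<phi> -` D. \<forall>i<n. y i = x i"
  have "\<exists>z\<in>D. \<forall>i<m. z i = \<phi> x i" for m
  proof -
    obtain N where N: "\<forall>x y. (\<forall>j<N. y j = x j) \<longrightarrow> (\<forall>i<m. \<phi> y i = \<phi> x i)" using \<phi> by blast
    obtain y where "\<phi> y \<in> D" "\<forall>i<N. y i = x i" using approx by blast
    then show ?thesis using N by blast
  qed
  then show "x \<in> \<phi> -` D" using assms(1) unfolding baire_closed_def by blast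
qed

lemma baire_continuous_on_compose:
  assumes "baire_continuous_on D g" "\<phi> ` C \<subseteq> D"
    and \<phi>: "\<And>m. \<exists>N. \<forall>x y. (\<forall>j<N. y j = x j) \<longrightarrow> (\<forall>i<m. \<phi> y i = \<phi> x i)"
  shows "baire_continuous_on C (\<lambda>x. g (\<phi> x))"
  unfolding baire_continuous_on_def
proof (intro ballI allI impI)
  fix x :: "nat \<Rightarrow> nat" and e :: real assume "x \<in> C" "e > 0"
  then have "\<phi> x \<in> D" using assms(2) by blast
  then obtain m where m: "\<forall>z\<in>D. (\<forall>i<m. z i = \<phi> x i) \<longrightarrow> \<bar>g z - g (\<phi> x)\<bar> < e"
    using assms(1)[unfolded baire_continuous_on_def, rule_format, OF _ \<open>e > 0\<close>] by blast
  obtain N where N: "\<forall>x y. (\<forall>j<N. y j = x j) \<longrightarrow> (\<forall>i<m. \<phi> y i = \<phi> x i)" using \<phi> by blast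
  show "\<exists>n. \<forall>y\<in>C. (\<forall>i<n. y i = x i) \<longrightarrow> \<bar>g (\<phi> y) - g (\<phi> x)\<bar> < e"
  proof (intro exI[of _ N] ballI impI)
    fix y assume "y \<in> C" "\<forall>i<N. y i = x i"
    then show "\<bar>g (\<phi> y) - g (\<phi> x)\<bar> < e" using assms(2) m N by blast
  qed
qed

text \<open>Via \<open>prod_encode\<close>, a point of the Baire space is a sequence of points of the Baire space.\<close>
definition baire_component :: "(nat \<Rightarrow> nat) \<Rightarrow> nat \<Rightarrow> nat \<Rightarrow> nat" where
  "baire_component x k = (\<lambda>i. x (prod_encode (k, i)))"

lemma baire_component_agree:
  "\<exists>N. \<forall>x y. (\<forall>j<N. y j = x j) \<longrightarrow> (\<forall>i<m. baire_component y k i = baire_component x k i)"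
proof
  show "\<forall>x y. (\<forall>j<Suc (Max ((\<lambda>i. prod_encode (k, i)) ` {..<m})). y j = x j) \<longrightarrow>
      (\<forall>i<m. baire_component y k i = baire_component x k i)"
    unfolding baire_component_def by (auto intro: le_imp_less_Suc Max_ge)
qed

lemma analytic_set_INT:
  assumes "\<And>n::nat. analytic_set (A n)" shows "analytic_set (\<Inter>n. A n)"
proof -
  obtain Cs fs where closed: "\<And>n. baire_closed (Cs n)"
    and cont: "\<And>n. baire_continuous_on (Cs n) (fs n)" and img: "\<And>n. A n = fs n ` Cs n"
    using analytic_set_family[of A] assms by blast
  let ?c = "baire_component"
  define D where "D = (\<Inter>k. (\<lambda>x. ?c x k) -` Cs k)"
  \<comment> \<open>the codes of sequences of points, one in each piece, that all have the same image\<close>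
  define C where "C = (\<Inter>k. {x\<in>D. fs k (?c x k) = fs 0 (?c x 0)})"
  have cont_D: "baire_continuous_on D (\<lambda>x. fs k (?c x k))" for k
    by (rule baire_continuous_on_compose[OF cont]) (auto simp: D_def baire_component_agree)
  have "baire_closed D"
    unfolding D_def by (intro baire_closed_INT baire_closed_vimage closed baire_component_agree)
  then have "baire_closed C"
    unfolding C_def by (intro baire_closed_INT baire_closed_equalizer cont_D)
  moreover have "baire_continuous_on C (\<lambda>x. fs 0 (?c x 0))"
    by (rule baire_continuous_on_compose[OF cont]) (auto simp: C_def D_def baire_component_agree)
  moreover have "(\<Inter>n. A n) = (\<lambda>x. fs 0 (?c x 0)) ` C"
  proof
    show "(\<lambda>x. fs 0 (?c x 0)) ` C \<subseteq> (\<Inter>n. A n)"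
    proof (intro subsetI InterI)
      fix z B assume "z \<in> (\<lambda>x. fs 0 (?c x 0)) ` C" "B \<in> range A"
      then obtain x k where "x \<in> C" "z = fs 0 (?c x 0)" "B = A k" by blast
      then have "?c x k \<in> Cs k" "z = fs k (?c x k)" unfolding C_def D_def by (auto dest: sym)
      then show "z \<in> B" using img[of k] \<open>B = A k\<close> by blast
    qed
    show "(\<Inter>n. A n) \<subseteq> (\<lambda>x. fs 0 (?c x 0)) ` C"
    proof
      fix z assume "z \<in> (\<Inter>n. A n)"
      then have "\<forall>k. \<exists>w. w \<in> Cs k \<and> fs k w = z" by (auto simp: img)
      from choice[OF this] obtain w where w: "\<forall>k. w k \<in> Cs k \<and> fs k (w k) = z" ..
      define x where "x j = w (fst (prod_decode j)) (snd (prod_decode j))" for j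
      have "?c x k = w k" for k unfolding baire_component_def x_def by simp
      with w have "x \<in> C" "z = fs 0 (?c x 0)" unfolding C_def D_def by auto
      then show "z \<in> (\<lambda>x. fs 0 (?c x 0)) ` C" by blast
    qed
  qed
  ultimately show ?thesis unfolding analytic_set_def by blast
qed

text \<open>The unit interval as a continuous image of the whole Baire space: binary expansions,
  reading every nonzero coordinate as the digit 1.\<close>
definition binary_value :: "(nat \<Rightarrow> nat) \<Rightarrow> real" where
  "binary_value x = (\<Sum>i. real (min (x i) 1) * (1/2) ^ Suc i)"

lemma binary_value_bounds:
  "(\<Sum>i<n. real (min (x i) 1) * (1/2) ^ Suc i) \<le> binary_value x \<and>
   binary_value x \<le> (\<Sum>i<n. real (min (x i) 1) * (1/2) ^ Suc i) + (1/2) ^ n"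
proof -
  define d where "d i = real (min (x i) 1) * (1/2::real) ^ Suc i" for i
  have d_le: "d i \<le> (1/2) ^ Suc i" and d_nonneg: "0 \<le> d i" for i
    unfolding d_def by (cases "x i") auto
  have geo: "(\<lambda>i. (1/2::real) ^ Suc (i + n)) sums ((1/2) ^ n)"
    using sums_mult[OF geometric_sums[of "1/2::real"], of "(1/2) ^ Suc n"]
    by (simp add: power_add mult.commute)
  have tail: "summable (\<lambda>i. d (i + n))"
    using d_le d_nonneg by (intro summable_comparison_test'[OF sums_summable[OF geo]]) auto
  have "binary_value x = (\<Sum>i. d (i + n)) + (\<Sum>i<n. d i)"
    unfolding binary_value_def d_def[symmetric]
    by (rule suminf_split_initial_segment) (use summable_iff_shift[of d n] tail in simp)
  moreover have "0 \<le> (\<Sum>i. d (i + n))" using tail d_nonneg by (simp add: suminf_nonneg)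
  moreover have "(\<Sum>i. d (i + n)) \<le> (1/2) ^ n"
    using suminf_le[OF _ tail sums_summable[OF geo]] d_le geo by (simp add: sums_iff)
  ultimately show ?thesis unfolding d_def by linarith
qed

lemma binary_value_continuous: "baire_continuous_on UNIV binary_value"
  unfolding baire_continuous_on_def
proof (intro ballI allI impI)
  fix x :: "nat \<Rightarrow> nat" and e :: real assume "e > 0"
  then obtain n where n: "(1/2::real) ^ n < e" using real_arch_pow_inv[of e "1/2"] by auto
  show "\<exists>n. \<forall>y\<in>UNIV. (\<forall>i<n. y i = x i) \<longrightarrow> \<bar>binary_value y - binary_value x\<bar> < e"
  proof (intro exI[of _ n] ballI impI)
    fix y :: "nat \<Rightarrow> nat" assume "\<forall>i<n. y i = x i"
    then have "(\<Sum>i<n. real (min (y i) 1) * (1/2) ^ Suc i) = (\<Sum>i<n. real (min (x i) 1) * (1/2) ^ Suc i)"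
      by (intro sum.cong) auto
    then show "\<bar>binary_value y - binary_value x\<bar> < e"
      using binary_value_bounds[of x n] binary_value_bounds[of y n] n by (simp add: abs_if)
  qed
qed

primrec greedy_partial :: "real \<Rightarrow> nat \<Rightarrow> real" where
  "greedy_partial t 0 = 0"
| "greedy_partial t (Suc n) =
     (if greedy_partial t n + (1/2) ^ Suc n \<le> t then greedy_partial t n + (1/2) ^ Suc n
      else greedy_partial t n)"

definition greedy_digit :: "real \<Rightarrow> nat \<Rightarrow> nat" where
  "greedy_digit t n = (if greedy_partial t n + (1/2) ^ Suc n \<le> t then 1 else 0)"

lemma greedy_partial_eq_sum:
  "(\<Sum>i<n. real (min (greedy_digit t i) 1) * (1/2) ^ Suc i) = greedy_partial t n"
  by (induction n) (simp_all add: greedy_digit_def)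

lemma greedy_partial_approx:
  assumes "0 \<le> t" "t \<le> 1" shows "greedy_partial t n \<le> t \<and> t \<le> greedy_partial t n + (1/2) ^ n"
  using assms by (induction n) auto

lemma binary_value_greedy_digit:
  assumes "t \<in> {0..1}" shows "binary_value (greedy_digit t) = t"
proof (rule ccontr)
  assume "binary_value (greedy_digit t) \<noteq> t"
  then obtain n where n: "(1/2::real) ^ n < \<bar>binary_value (greedy_digit t) - t\<bar>"
    using real_arch_pow_inv[of "\<bar>binary_value (greedy_digit t) - t\<bar>" "1/2"] by auto
  show False
    using binary_value_bounds[of "greedy_digit t" n] greedy_partial_approx[of t n] assms n
    unfolding greedy_partial_eq_sum by auto
qed

lemma analytic_set_unit_interval: "analytic_set {0..1}"
proof -
  have "binary_value ` UNIV = {0..1}"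
  proof (intro equalityI subsetI)
    show "y \<in> {0..1}" if "y \<in> range binary_value" for y
      using that binary_value_bounds[where n = 0] by auto
    show "y \<in> range binary_value" if "y \<in> {0..1}" for y
      using binary_value_greedy_digit[OF that] by (metis rangeI)
  qed
  moreover have "baire_closed UNIV" unfolding baire_closed_def by simp
  ultimately show ?thesis unfolding analytic_set_def using binary_value_continuous by blast
qed

lemma analytic_set_atLeast: "analytic_set {a..}"
proof -
  have "{a..} = (\<Union>k::nat. (\<lambda>x. x + (a + real k)) ` {0..1})"
  proof (intro equalityI subsetI)
    fix y assume "y \<in> {a..}"
    then have "y - (a + real (nat \<lfloor>y - a\<rfloor>)) \<in> {0..1}" by simp linarith
    then show "y \<in> (\<Union>k::nat. (\<lambda>x. x + (a + real k)) ` {0..1})"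
      by (intro UN_I[of "nat \<lfloor>y - a\<rfloor>"]) (auto intro!: image_eqI[of _ _ "y - (a + real (nat \<lfloor>y - a\<rfloor>))"])
  qed auto
  then show ?thesis by (metis analytic_set_UN analytic_set_translation analytic_set_unit_interval)
qed

lemma analytic_set_atMost: "analytic_set {..a}"
proof -
  have "{..a} = (\<Union>k::nat. (\<lambda>x. x + (a - real k - 1)) ` {0..1})"
  proof (intro equalityI subsetI)
    fix y assume "y \<in> {..a}"
    then have "y - (a - real (nat \<lfloor>a - y\<rfloor>) - 1) \<in> {0..1}" by simp linarith
    then show "y \<in> (\<Union>k::nat. (\<lambda>x. x + (a - real k - 1)) ` {0..1})"
      by (intro UN_I[of "nat \<lfloor>a - y\<rfloor>"]) (auto intro!: image_eqI[of _ _ "y - (a - real (nat \<lfloor>a - y\<rfloor>) - 1)"])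
  qed auto
  then show ?thesis by (metis analytic_set_UN analytic_set_translation analytic_set_unit_interval)
qed

lemma analytic_set_greaterThan: "analytic_set {a<..}"
proof -
  have "{a<..} = (\<Union>n::nat. {a + inverse (real (Suc n))..})"
  proof (intro equalityI subsetI)
    fix y assume "y \<in> {a<..}"
    then obtain n where "inverse (real (Suc n)) < y - a" using reals_Archimedean[of "y - a"] by auto
    then show "y \<in> (\<Union>n::nat. {a + inverse (real (Suc n))..})" by (intro UN_I[of n]) auto
  next
    fix y assume "y \<in> (\<Union>n::nat. {a + inverse (real (Suc n))..})"
    then show "y \<in> {a<..}" by (auto intro: less_le_trans[of _ "a + inverse (real (Suc _))"])
  qed
  then show ?thesis by (metis analytic_set_UN analytic_set_atLeast)
qed

lemma analytic_set_UNIV: "analytic_set (UNIV :: real set)"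
proof -
  have "(UNIV :: real set) = (\<Union>n::nat. {- real n..})"
  proof (intro equalityI subsetI)
    fix y :: real
    obtain n :: nat where "- y \<le> real n" using real_arch_simple by blast
    then show "y \<in> (\<Union>n::nat. {- real n..})" by (intro UN_I[of n]) auto
  qed auto
  then show ?thesis by (metis analytic_set_UN analytic_set_atLeast)
qed

lemma borel_imp_analytic_set:
  assumes "(Z :: real set) \<in> sets borel" shows "analytic_set Z"
proof -
  have "A \<in> sigma_sets UNIV (range atMost) \<Longrightarrow> analytic_set A \<and> analytic_set (- A)" for A :: "real set"
  proof (induction rule: sigma_sets.induct)
    case (Basic A)
    then obtain b where "A = {..b}" by blast
    moreover have "- {..b} = {b<..}" by auto
    ultimately show ?case using analytic_set_atMost analytic_set_greaterThan by simp
  next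
    case (Union A)
    have "- (\<Union>i. A i) = (\<Inter>i. - A i)" by auto
    then show ?case using Union.IH analytic_set_UN analytic_set_INT by simp
  qed (simp_all add: analytic_set_empty analytic_set_UNIV Compl_eq_Diff_UNIV[symmetric])
  moreover have "sets (borel :: real measure) = sigma_sets UNIV (range atMost)"
    unfolding borel_eq_atMost by (rule sets_measure_of) blast
  ultimately show ?thesis using assms by blast
qed

section \<open>Perfect subsets of uncountable analytic sets\<close>

text \<open>A code \<open>c\<close> assigns reals to the nodes of the binary tree; \<open>branch_limits c\<close> collects the
  limits of \<open>c\<close> along the branches. Prefixes are stored reversed, so the newest bit is the head.\<close>
definition branch_prefix :: "(nat \<Rightarrow> bool) \<Rightarrow> nat \<Rightarrow> bool list" where
  "branch_prefix \<alpha> n = rev (map \<alpha> [0..<n])"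

definition branch_limits :: "(bool list \<Rightarrow> real) \<Rightarrow> real set" where
  "branch_limits c = {L. \<exists>\<alpha>. (\<lambda>n. c (branch_prefix \<alpha> n)) \<longlonglongrightarrow> L}"

lemma length_branch_prefix [simp]: "length (branch_prefix \<alpha> n) = n"
  unfolding branch_prefix_def by simp

lemma branch_prefix_Suc [simp]: "branch_prefix \<alpha> (Suc n) = \<alpha> n # branch_prefix \<alpha> n"
  unfolding branch_prefix_def by simp

lemma branch_prefix_cong: "\<forall>i<n. \<alpha> i = \<beta> i \<Longrightarrow> branch_prefix \<alpha> n = branch_prefix \<beta> n"
  unfolding branch_prefix_def by simp

lemma in_cylinder_initial_segment: "x \<in> cylinder (map x [0..<m])"
  unfolding cylinder_def by simp

lemma strict_prefix_if_cylinder: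
  assumes "x \<in> cylinder s" "x \<in> cylinder s'" "length s < length s'"
  shows "strict_prefix s s'"
proof -
  have "take (length s) s' = s"
    using assms unfolding cylinder_def by (auto simp: list_eq_iff_nth_eq)
  then show ?thesis using assms(3) by (metis append_take_drop_id prefixI prefix_order.le_less
        less_irrefl)
qed

locale uncountable_analytic =
  fixes C :: "(nat \<Rightarrow> nat) set" and f :: "(nat \<Rightarrow> nat) \<Rightarrow> real"
  assumes closed: "baire_closed C" and cont: "baire_continuous_on C f"
    and uncountable: "uncountable (f ` C)"
begin

lemma small_cylinder:
  assumes "x \<in> C" "e > 0"
  shows "\<exists>s. x \<in> cylinder s \<and> m < length s \<and> (\<forall>y\<in>C \<inter> cylinder s. \<bar>f y - f x\<bar> < e)"
proof -
  obtain n where n: "\<forall>y\<in>C. (\<forall>i<n. y i = x i) \<longrightarrow> \<bar>f y - f x\<bar> < e"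
    using cont[unfolded baire_continuous_on_def, rule_format, OF assms] by blast
  define s where "s = map x [0..<max n (Suc m)]"
  have "\<forall>y\<in>C \<inter> cylinder s. \<bar>f y - f x\<bar> < e" using n unfolding s_def cylinder_def by auto
  moreover have "x \<in> cylinder s" "m < length s"
    unfolding s_def by (simp_all only: in_cylinder_initial_segment) simp
  ultimately show ?thesis by blast
qed

text \<open>The perfect kernel consists of the points of \<open>C\<close> all of whose neighbourhoods have
  uncountable image; discarding the other points loses only countably many values.\<close>
definition perfect_kernel :: "(nat \<Rightarrow> nat) set" where
  "perfect_kernel = C - (\<Union>s\<in>{s. countable (f ` (C \<inter> cylinder s))}. cylinder s)"

lemma perfect_kernel_subset: "perfect_kernel \<subseteq> C"
  unfolding perfect_kernel_def by blast

lemma countable_image_outside_perfect_kernel: "countable (f ` (C - perfect_kernel))"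
proof -
  have "f ` (C - perfect_kernel) = (\<Union>s\<in>{s. countable (f ` (C \<inter> cylinder s))}. f ` (C \<inter> cylinder s))"
    unfolding perfect_kernel_def by blast
  then show ?thesis by (auto intro: countable_UN[OF countable_subset[OF subset_UNIV]])
qed

lemma uncountable_image_perfect_kernel_cylinder:
  assumes "perfect_kernel \<inter> cylinder s \<noteq> {}" shows "uncountable (f ` (perfect_kernel \<inter> cylinder s))"
proof
  assume "countable (f ` (perfect_kernel \<inter> cylinder s))"
  moreover have "f ` (C \<inter> cylinder s) \<subseteq> f ` (perfect_kernel \<inter> cylinder s) \<union> f ` (C - perfect_kernel)"
    by blast
  ultimately have "countable (f ` (C \<inter> cylinder s))"
    using countable_image_outside_perfect_kernel countable_Un countable_subset by metis
  then show False using assms unfolding perfect_kernel_def by blast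
qed

lemma perfect_kernel_nonempty: "perfect_kernel \<noteq> {}"
proof
  assume "perfect_kernel = {}"
  then have "f ` C \<subseteq> f ` (C - perfect_kernel)" by simp
  then show False using uncountable countable_image_outside_perfect_kernel countable_subset by blast
qed

definition small_image :: "nat \<Rightarrow> nat list \<Rightarrow> bool" where
  "small_image n s \<longleftrightarrow> (\<forall>y\<in>C \<inter> cylinder s. \<forall>y'\<in>C \<inter> cylinder s. \<bar>f y - f y'\<bar> < (1/2) ^ n)"

definition splits :: "nat \<Rightarrow> nat list \<Rightarrow> nat list \<Rightarrow> nat list \<Rightarrow> bool" where
  "splits n s s0 s1 \<longleftrightarrow> perfect_kernel \<inter> cylinder s0 \<noteq> {} \<and> perfect_kernel \<inter> cylinder s1 \<noteq> {} \<and>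
     strict_prefix s s0 \<and> strict_prefix s s1 \<and> small_image n s0 \<and> small_image n s1 \<and>
     f ` (C \<inter> cylinder s0) \<inter> f ` (C \<inter> cylinder s1) = {}"

lemma splits_exists:
  assumes "perfect_kernel \<inter> cylinder s \<noteq> {}" shows "\<exists>s0 s1. splits n s s0 s1"
proof -
  obtain x0 x1 where x: "x0 \<in> perfect_kernel \<inter> cylinder s" "x1 \<in> perfect_kernel \<inter> cylinder s"
    "f x0 \<noteq> f x1"
  proof -
    let ?S = "f ` (perfect_kernel \<inter> cylinder s)"
    have unc: "uncountable ?S" using uncountable_image_perfect_kernel_cylinder[OF assms] .
    then obtain y0 where "y0 \<in> ?S" by fastforce
    moreover have "\<not> ?S \<subseteq> {y0}" using unc countable_subset[of ?S "{y0}"] by auto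
    ultimately show thesis using that by blast
  qed
  define e where "e = min ((1/2) ^ n / 2) (\<bar>f x0 - f x1\<bar> / 3)"
  have "e > 0" using x(3) unfolding e_def by simp
  have "x0 \<in> C" "x1 \<in> C" using x perfect_kernel_subset by auto
  obtain s0 where s0: "x0 \<in> cylinder s0" "length s < length s0" "\<forall>y\<in>C \<inter> cylinder s0. \<bar>f y - f x0\<bar> < e"
    using small_cylinder[OF \<open>x0 \<in> C\<close> \<open>e > 0\<close>] by blast
  obtain s1 where s1: "x1 \<in> cylinder s1" "length s < length s1" "\<forall>y\<in>C \<inter> cylinder s1. \<bar>f y - f x1\<bar> < e"
    using small_cylinder[OF \<open>x1 \<in> C\<close> \<open>e > 0\<close>] by blast
  have "strict_prefix s s0" "strict_prefix s s1"
    using strict_prefix_if_cylinder x s0 s1 by blast+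
  moreover have "small_image n s0" "small_image n s1"
    using s0(3) s1(3) unfolding small_image_def e_def by (smt (verit) field_sum_of_halves)+
  moreover have "f ` (C \<inter> cylinder s0) \<inter> f ` (C \<inter> cylinder s1) = {}"
  proof (intro equals0I)
    fix z assume "z \<in> f ` (C \<inter> cylinder s0) \<inter> f ` (C \<inter> cylinder s1)"
    then have "\<bar>z - f x0\<bar> < e" "\<bar>z - f x1\<bar> < e" using s0(3) s1(3) by auto
    moreover have "e \<le> \<bar>f x0 - f x1\<bar> / 3" unfolding e_def by linarith
    ultimately show False by (simp add: abs_if split: if_splits)
  qed
  ultimately show ?thesis unfolding splits_def using x s0(1) s1(1) by blast
qed

definition split_node :: "nat \<Rightarrow> nat list \<Rightarrow> bool \<Rightarrow> nat list" where
  "split_node n s b = (let p = SOME p. splits n s (fst p) (snd p) in if b then fst p else snd p)"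

lemma splits_split_node:
  assumes "perfect_kernel \<inter> cylinder s \<noteq> {}"
  shows "splits n s (split_node n s True) (split_node n s False)"
proof -
  have "\<exists>p. splits n s (fst p) (snd p)" using splits_exists[OF assms] by simp
  from someI_ex[OF this] show ?thesis unfolding split_node_def by simp
qed

text \<open>The Cantor scheme: the node \<open>b # t\<close> of the binary tree is sent to one of the two
  disjoint pieces into which the cylinder of \<open>t\<close> is split at level \<open>length t\<close>.\<close>
fun scheme :: "bool list \<Rightarrow> nat list" where
  "scheme [] = []"
| "scheme (b # t) = split_node (length t) (scheme t) b"

lemma perfect_kernel_meets_scheme: "perfect_kernel \<inter> cylinder (scheme t) \<noteq> {}"
proof (induction t)
  case Nil
  then show ?case using perfect_kernel_nonempty by (simp add: cylinder_def)
next
  case (Cons b t)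
  then show ?case using splits_split_node[OF Cons.IH, of "length t"] unfolding splits_def
    by (cases b) auto
qed

lemma splits_scheme: "splits (length t) (scheme t) (scheme (True # t)) (scheme (False # t))"
  using splits_split_node[OF perfect_kernel_meets_scheme] by simp

lemma strict_prefix_scheme_Cons: "strict_prefix (scheme t) (scheme (b # t))"
  using splits_scheme[of t] unfolding splits_def by (cases b) auto

lemma small_image_scheme_Cons: "small_image (length t) (scheme (b # t))"
  using splits_scheme[of t] unfolding splits_def by (cases b) auto

lemma prefix_scheme_branch_prefix:
  "n \<le> m \<Longrightarrow> prefix (scheme (branch_prefix \<alpha> n)) (scheme (branch_prefix \<alpha> m))"
proof (induction m rule: dec_induct)
  case (step m)
  then show ?case
    using strict_prefix_scheme_Cons[of "branch_prefix \<alpha> m" "\<alpha> m"] by (auto intro: prefix_order.trans)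
qed simp

lemma length_scheme_branch_prefix: "n \<le> length (scheme (branch_prefix \<alpha> n))"
proof (induction n)
  case (Suc n)
  then show ?case
    using prefix_length_less[OF strict_prefix_scheme_Cons[of "branch_prefix \<alpha> n" "\<alpha> n"]] by simp
qed simp

definition branch_point :: "(nat \<Rightarrow> bool) \<Rightarrow> nat \<Rightarrow> nat" where
  "branch_point \<alpha> i = scheme (branch_prefix \<alpha> (Suc i)) ! i"

lemma branch_point_in_cylinder: "branch_point \<alpha> \<in> cylinder (scheme (branch_prefix \<alpha> n))"
  unfolding cylinder_def
proof (intro CollectI allI impI)
  fix i assume i: "i < length (scheme (branch_prefix \<alpha> n))"
  let ?s = "\<lambda>n. scheme (branch_prefix \<alpha> n)" and ?m = "max n (Suc i)"
  have nth_prefix: "xs ! i = ys ! i" if "prefix xs ys" "i < length xs" for xs ys :: "nat list"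
    using that by (auto elim!: prefixE simp: nth_append)
  have "?s n ! i = ?s ?m ! i"
    using nth_prefix[OF prefix_scheme_branch_prefix i] by simp
  moreover have "?s (Suc i) ! i = ?s ?m ! i"
    by (rule nth_prefix[OF prefix_scheme_branch_prefix])
      (use length_scheme_branch_prefix[of "Suc i" \<alpha>] in auto)
  ultimately show "branch_point \<alpha> i = ?s n ! i" unfolding branch_point_def by simp
qed

lemma branch_point_in_C: "branch_point \<alpha> \<in> C"
proof -
  have "\<exists>y\<in>C. \<forall>i<n. y i = branch_point \<alpha> i" for n
  proof -
    obtain y where y: "y \<in> perfect_kernel" "y \<in> cylinder (scheme (branch_prefix \<alpha> n))"
      using perfect_kernel_meets_scheme by blast
    moreover have "n \<le> length (scheme (branch_prefix \<alpha> n))" by (rule length_scheme_branch_prefix)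
    ultimately have "\<forall>i<n. y i = branch_point \<alpha> i"
      using branch_point_in_cylinder[of \<alpha> n] unfolding cylinder_def by auto
    then show ?thesis using y(1) perfect_kernel_subset by blast
  qed
  then show ?thesis using closed unfolding baire_closed_def by blast
qed

definition scheme_value :: "bool list \<Rightarrow> real" where
  "scheme_value t = f (SOME y. y \<in> perfect_kernel \<inter> cylinder (scheme t))"

lemma branch_point_in_scheme_Suc:
  "branch_point \<alpha> \<in> C \<inter> cylinder (scheme (\<alpha> n # branch_prefix \<alpha> n))"
  using branch_point_in_C branch_point_in_cylinder[of \<alpha> "Suc n"] by simp

lemma scheme_value_close:
  "\<bar>scheme_value (branch_prefix \<alpha> (Suc n)) - f (branch_point \<alpha>)\<bar> < (1/2) ^ n"
proof -
  let ?t = "branch_prefix \<alpha> (Suc n)"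
  have "\<exists>y. y \<in> perfect_kernel \<inter> cylinder (scheme ?t)"
    using perfect_kernel_meets_scheme by blast
  then have "(SOME y. y \<in> perfect_kernel \<inter> cylinder (scheme ?t)) \<in> C \<inter> cylinder (scheme ?t)"
    by (rule someI_ex[THEN subsetD[OF Int_mono[OF perfect_kernel_subset order_refl]]])
  moreover have "branch_point \<alpha> \<in> C \<inter> cylinder (scheme ?t)"
    using branch_point_in_C branch_point_in_cylinder by blast
  ultimately show ?thesis
    using small_image_scheme_Cons[of "branch_prefix \<alpha> n" "\<alpha> n"]
    unfolding small_image_def scheme_value_def by simp
qed

lemma scheme_value_tendsto: "(\<lambda>n. scheme_value (branch_prefix \<alpha> n)) \<longlonglongrightarrow> f (branch_point \<alpha>)"
proof -
  have "(\<lambda>n. scheme_value (branch_prefix \<alpha> (Suc n)) - f (branch_point \<alpha>)) \<longlonglongrightarrow> 0"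
  proof (rule Lim_null_comparison)
    show "\<forall>\<^sub>F n in sequentially.
        norm (scheme_value (branch_prefix \<alpha> (Suc n)) - f (branch_point \<alpha>)) \<le> (1/2) ^ n"
      using scheme_value_close[of \<alpha>] by (intro always_eventually allI) (simp add: less_imp_le)
    show "(\<lambda>n. (1/2::real) ^ n) \<longlonglongrightarrow> 0" by (rule LIMSEQ_power_zero) simp
  qed
  then have "(\<lambda>n. scheme_value (branch_prefix \<alpha> (Suc n))) \<longlonglongrightarrow> f (branch_point \<alpha>)"
    by (simp only: Lim_null[symmetric])
  then show ?thesis by (rule LIMSEQ_imp_Suc)
qed

lemma inj_branch_point_value: "inj (\<lambda>\<alpha>. f (branch_point \<alpha>))"
proof (rule injI, rule ccontr)
  fix \<alpha> \<beta> assume eq: "f (branch_point \<alpha>) = f (branch_point \<beta>)" and "\<alpha> \<noteq> \<beta>"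
  then obtain n where n: "\<alpha> n \<noteq> \<beta> n" "\<forall>i<n. \<alpha> i = \<beta> i"
    using exists_least_iff[of "\<lambda>n. \<alpha> n \<noteq> \<beta> n"] by blast
  define t where "t = branch_prefix \<alpha> n"
  have disj: "f ` (C \<inter> cylinder (scheme (b # t))) \<inter> f ` (C \<inter> cylinder (scheme ((\<not> b) # t))) = {}"
    for b
    using splits_scheme[of t] unfolding splits_def by (cases b) (simp_all only: Int_commute simp_thms)
  have "branch_point \<alpha> \<in> C \<inter> cylinder (scheme (\<alpha> n # t))"
    unfolding t_def by (rule branch_point_in_scheme_Suc)
  moreover have "branch_prefix \<beta> n = t" unfolding t_def using branch_prefix_cong[OF n(2)] by simp
  then have "branch_point \<beta> \<in> C \<inter> cylinder (scheme ((\<not> \<alpha> n) # t))"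
    using branch_point_in_scheme_Suc[of \<beta> n] n(1) by simp
  ultimately show False using disj[of "\<alpha> n"] eq by blast
qed

theorem perfect_subset: "\<exists>c. |UNIV :: (nat \<Rightarrow> bool) set| \<le>o |branch_limits c| \<and> branch_limits c \<subseteq> f ` C"
proof (intro exI conjI)
  have "range (\<lambda>\<alpha>. f (branch_point \<alpha>)) \<subseteq> branch_limits scheme_value"
    unfolding branch_limits_def using scheme_value_tendsto by blast
  then show "|UNIV :: (nat \<Rightarrow> bool) set| \<le>o |branch_limits scheme_value|"
    using inj_branch_point_value card_of_ordLeq by blast
  show "branch_limits scheme_value \<subseteq> f ` C"
    unfolding branch_limits_def using scheme_value_tendsto LIMSEQ_unique branch_point_in_C by blast
qed

end

corollary borel_uncountable_contains_branch_limits: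
  assumes "Z \<in> sets borel" "uncountable Z"
  shows "\<exists>c. |UNIV :: (nat \<Rightarrow> bool) set| \<le>o |branch_limits c| \<and> branch_limits c \<subseteq> Z"
proof -
  obtain C f where "baire_closed C" "baire_continuous_on C f" "Z = f ` C"
    using borel_imp_analytic_set[OF assms(1)] unfolding analytic_set_def by blast
  then interpret uncountable_analytic C f using assms(2) by unfold_locales auto
  show ?thesis using perfect_subset \<open>Z = f ` C\<close> by simp
qed

section \<open>Cardinal arithmetic of the continuum\<close>

lemma card_of_real_le_Cantor: "|UNIV :: real set| \<le>o |UNIV :: (nat \<Rightarrow> bool) set|"
proof -
  define below :: "real \<Rightarrow> nat \<Rightarrow> bool" where "below x n = (of_rat (from_nat n) < x)" for x n
  have ne: "below u \<noteq> below v" if "u < v" for u v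
  proof
    assume "below u = below v"
    obtain q where "u < of_rat q" "of_rat q < v" using of_rat_dense[OF \<open>u < v\<close>] by blast
    moreover have "below u (to_nat q) = below v (to_nat q)" using \<open>below u = below v\<close> by simp
    ultimately show False unfolding below_def by simp
  qed
  have "inj below"
  proof (rule injI)
    fix x y assume "below x = below y"
    then show "x = y" using ne[of x y] ne[of y x] by (cases x y rule: linorder_cases) auto
  qed
  then show ?thesis using card_of_ordLeq[of "UNIV :: real set"] by blast
qed

lemma card_of_Cantor_le_real: "|UNIV :: (nat \<Rightarrow> bool) set| \<le>o |UNIV :: real set|"
proof -
  have "UNIV \<in> sets (borel :: real measure)" by simp
  from borel_uncountable_contains_branch_limits[OF this uncountable_UNIV_real]
  obtain c where "|UNIV :: (nat \<Rightarrow> bool) set| \<le>o |branch_limits c|"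
    by blast
  moreover have "|branch_limits c| \<le>o |UNIV :: real set|" by (rule card_of_mono1) simp
  ultimately show ?thesis by (rule ordLeq_transitive)
qed

lemma card_of_codes_le_real: "|UNIV :: (bool list \<Rightarrow> real) set| \<le>o |UNIV :: real set|"
proof -
  obtain i :: "real \<Rightarrow> nat \<Rightarrow> bool" where i: "inj i"
    using iffD2[OF card_of_ordLeq card_of_real_le_Cantor] by blast
  \<comment> \<open>the digits of all values of a code, interleaved along an enumeration of \<open>bool list \<times> nat\<close>\<close>
  define e where "e d k = i (d (fst (from_nat k :: bool list \<times> nat))) (snd (from_nat k :: bool list \<times> nat))"
    for d :: "bool list \<Rightarrow> real" and k
  have "inj e"
  proof (rule injI, rule ext)
    fix d d' l assume "e d = e d'"
    then have "i (d l) n = i (d' l) n" for n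
      using fun_cong[of "e d" "e d'" "to_nat (l, n)"] unfolding e_def by simp
    then have "i (d l) = i (d' l)" by (rule ext)
    then show "d l = d' l" by (rule injD[OF i])
  qed
  then have "|UNIV :: (bool list \<Rightarrow> real) set| \<le>o |UNIV :: (nat \<Rightarrow> bool) set|"
    using card_of_ordLeq by blast
  then show ?thesis using card_of_Cantor_le_real ordLeq_transitive by blast
qed

lemma card_of_Times_ordLess_infinite_same_type:
  fixes A B :: "'a set"
  assumes "infinite C" "|A| <o |C|" "|B| <o |C|"
  shows "|A \<times> B| <o |C|"
proof (cases "finite (A \<union> B)")
  case True
  then have "finite (A \<times> B)" by simp
  then show ?thesis
    using assms(1) finite_ordLess_infinite[OF card_of_Well_order card_of_Well_order]
    by (simp add: Field_card_of)
next
  case False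
  have "|A \<times> B| \<le>o |(A \<union> B) \<times> (A \<union> B)|" by (rule card_of_mono1) blast
  also have "|(A \<union> B) \<times> (A \<union> B)| =o |A \<union> B|" using False by (rule card_of_Times_same_infinite)
  also have "|A \<union> B| <o |C|" using assms by (rule card_of_Un_ordLess_infinite)
  finally show ?thesis .
qed

lemma card_of_under_ordLess:
  assumes "infinite (UNIV :: 'a set)"
  shows "|under |UNIV :: 'a set| a| <o |UNIV :: 'a set|"
proof -
  have "|underS |UNIV :: 'a set| a| <o |UNIV :: 'a set|"
    using card_of_underS[OF card_of_Card_order, of a "UNIV :: 'a set"] by (simp add: Field_card_of)
  moreover have "|{a}| <o |UNIV :: 'a set|"
    using assms finite_ordLess_infinite[OF card_of_Well_order card_of_Well_order, of "{a}"]
    by (simp add: Field_card_of)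
  moreover have "under |UNIV :: 'a set| a = underS |UNIV :: 'a set| a \<union> {a}"
    using card_of_Well_order[of "UNIV :: 'a set"] unfolding under_def underS_def well_order_on_def
      linear_order_on_def partial_order_on_def preorder_on_def refl_on_def
    by (auto simp: Field_card_of)
  ultimately show ?thesis using assms card_of_Un_ordLess_infinite by metis
qed

lemma not_cofinal_imp_bounded:
  assumes "infinite (UNIV :: 'a set)" "\<not> cofinal X |UNIV :: 'a set|"
  shows "\<exists>a. X \<subseteq> underS |UNIV :: 'a set| a"
proof -
  let ?r = "|UNIV :: 'a set|"
  have wo: "wo_rel ?r" using card_of_Well_order by (simp add: wo_rel_def)
  from assms(2) obtain a where a: "\<forall>b\<in>X. a = b \<or> (a, b) \<notin> ?r"
    unfolding cofinal_def Field_card_of by blast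
  obtain a' where a': "a \<noteq> a'" "(a, a') \<in> ?r"
    using infinite_Card_order_limit[OF card_of_Card_order, of UNIV a] assms(1)
    unfolding Field_card_of by blast
  have "b \<in> underS ?r a'" if "b \<in> X" for b
  proof -
    have "(a', b) \<notin> ?r"
    proof
      assume "(a', b) \<in> ?r"
      then have "(a, b) \<in> ?r" using a'(2) wo_rel.TRANS[OF wo] unfolding trans_def by blast
      then have "a = b" using a \<open>b \<in> X\<close> by blast
      then show False using a' \<open>(a', b) \<in> ?r\<close> wo_rel.ANTISYM[OF wo] unfolding antisym_def by blast
    qed
    then show ?thesis using wo_rel.TOTALS[OF wo] wo_rel.REFL[OF wo] unfolding underS_def refl_on_def Field_card_of by blast
  qed
  then show ?thesis by blast
qed

lemma large_set_unbounded:
  assumes "|UNIV :: 'a set| \<le>o |S|"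
  shows "\<exists>a\<in>S. (b, a) \<in> |UNIV :: 'a set|"
proof (rule ccontr)
  have wo: "wo_rel |UNIV :: 'a set|" using card_of_Well_order by (simp add: wo_rel_def)
  assume "\<not> ?thesis"
  then have "S \<subseteq> underS |UNIV :: 'a set| b"
    using wo_rel.TOTALS[OF wo] wo_rel.REFL[OF wo] unfolding underS_def refl_on_def by (auto simp: Field_card_of)
  then have "|S| <o |UNIV :: 'a set|"
    using card_of_underS[of "|UNIV :: 'a set|" b] card_of_mono1 ordLeq_ordLess_trans
    by (metis card_of_Card_order Field_card_of UNIV_I)
  then show False using assms not_ordLess_ordLeq by blast
qed

lemma exists_map_with_large_fibres:
  assumes "infinite (UNIV :: 'a set)" "|UNIV :: 't set| \<le>o |UNIV :: 'a set|"
  shows "\<exists>\<tau> :: 'a \<Rightarrow> 't. \<forall>t. |UNIV :: 'a set| \<le>o |\<tau> -` {t}|"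
proof -
  have "|(UNIV :: 'a set) \<times> (UNIV :: 't set)| =o |UNIV :: 'a set|"
    by (rule card_of_Times_infinite[OF assms(1) UNIV_not_empty assms(2), THEN conjunct1])
  then have le: "|(UNIV :: 'a set) \<times> (UNIV :: 't set)| \<le>o |UNIV :: 'a set|"
    by (rule ordIso_imp_ordLeq)
  have "\<exists>g :: 'a \<Rightarrow> 'a \<times> 't. g ` UNIV = (UNIV :: 'a set) \<times> (UNIV :: 't set)"
    by (rule card_of_ordLeq2[THEN iffD2, OF _ le]) simp
  then obtain g :: "'a \<Rightarrow> 'a \<times> 't" where g: "range g = UNIV" by auto
  have "|UNIV :: 'a set| \<le>o |(snd \<circ> g) -` {t}|" for t
  proof -
    have sub: "(UNIV :: 'a set) \<times> {t} \<subseteq> g ` ((snd \<circ> g) -` {t})"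
    proof
      fix p assume "p \<in> (UNIV :: 'a set) \<times> {t}"
      moreover have "p \<in> range g" using g by simp
      then obtain a where "g a = p" by blast
      ultimately show "p \<in> g ` ((snd \<circ> g) -` {t})" by (intro image_eqI[of p g a]) auto
    qed
    have "|(UNIV :: 'a set) \<times> {t}| \<le>o |(snd \<circ> g) -` {t}|"
      using ordLeq_transitive[OF card_of_mono1[OF sub] card_of_image] .
    then show ?thesis by (rule ordLeq_transitive[OF card_of_Times1[of "{t}" "UNIV :: 'a set"], rotated]) simp
  qed
  then show ?thesis by blast
qed

lemma exists_translate_avoiding:
  fixes U V :: "'a::ab_group_add set"
  assumes "infinite (UNIV :: 'a set)" "|U| <o |UNIV :: 'a set|" "|V| <o |UNIV :: 'a set|"
  shows "\<exists>x. (\<lambda>t. t + x) ` V \<inter> U = {}"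
proof -
  let ?D = "(\<lambda>(u, t). u - t) ` (U \<times> V)"
  have "|?D| <o |UNIV :: 'a set|"
    using card_of_image ordLeq_ordLess_trans card_of_Times_ordLess_infinite_same_type[OF assms]
    by blast
  then obtain x where "x \<notin> ?D" using ordLess_irreflexive by (metis UNIV_eq_I)
  then have "(\<lambda>t. t + x) ` V \<inter> U = {}" by (force simp: algebra_simps)
  then show ?thesis ..
qed

section \<open>Transfinite recursion avoiding earlier choices\<close>

lemma exists_transfinite_recursion:
  fixes step :: "'a \<Rightarrow> 'b set \<Rightarrow> 'b set"
  shows "\<exists>v. \<forall>a. v a = step a (\<Union>b\<in>underS |UNIV :: 'a set| a. v b)"
proof -
  let ?r = "|UNIV :: 'a set|"
  have wo: "wo_rel ?r" using card_of_Well_order by (simp add: wo_rel_def)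
  have "wo_rel.adm_wo ?r (\<lambda>v a. step a (\<Union>b\<in>underS ?r a. v b))"
    unfolding wo_rel.adm_wo_def[OF wo]
  proof (intro allI impI)
    fix f g :: "'a \<Rightarrow> 'b set" and a assume "\<forall>b\<in>underS ?r a. f b = g b"
    then have "(\<Union>b\<in>underS ?r a. f b) = (\<Union>b\<in>underS ?r a. g b)" by simp
    then show "step a (\<Union>b\<in>underS ?r a. f b) = step a (\<Union>b\<in>underS ?r a. g b)" by simp
  qed
  then have "\<And>a. wo_rel.worec ?r (\<lambda>v a. step a (\<Union>b\<in>underS ?r a. v b)) a =
      step a (\<Union>b\<in>underS ?r a. wo_rel.worec ?r (\<lambda>v a. step a (\<Union>b\<in>underS ?r a. v b)) b)"
    by (subst wo_rel.worec_fixpoint[OF wo]) simp_all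
  then show ?thesis by blast
qed

lemma card_of_UN_underS_ordLess:
  fixes v :: "'a \<Rightarrow> 'b set"
  assumes inf: "infinite (UNIV :: 'a set)" and size: "\<And>b. |v b| \<le>o |under |UNIV :: 'a set| b|"
  shows "|\<Union>b\<in>underS |UNIV :: 'a set| a. v b| <o |UNIV :: 'a set|"
proof -
  let ?r = "|UNIV :: 'a set|"
  have wo: "wo_rel ?r" using card_of_Well_order by (simp add: wo_rel_def)
  have "|v b| \<le>o |under ?r a|" if "b \<in> underS ?r a" for b
  proof -
    have "under ?r b \<subseteq> under ?r a"
      using that wo_rel.TRANS[OF wo] unfolding under_def underS_def trans_def by blast
    then show ?thesis using ordLeq_transitive[OF size card_of_mono1] by blast
  qed
  then have "|SIGMA b:underS ?r a. v b| \<le>o |underS ?r a \<times> under ?r a|"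
    by (rule card_of_Sigma_mono1[OF ballI])
  moreover have "|underS ?r a| <o ?r"
    using card_of_underS[OF card_of_Card_order, of a] by (simp add: Field_card_of)
  then have "|underS ?r a \<times> under ?r a| <o ?r"
    by (rule card_of_Times_ordLess_infinite_same_type[OF inf _ card_of_under_ordLess[OF inf]])
  ultimately show ?thesis
    using ordLeq_ordLess_trans[OF ordLeq_transitive[OF card_of_UNION_Sigma]] by blast
qed

lemma transfinite_disjoint_choice:
  fixes step :: "'a \<Rightarrow> 'b set \<Rightarrow> 'b set"
  assumes inf: "infinite (UNIV :: 'a set)"
    and size: "\<And>a U. |step a U| \<le>o |under |UNIV :: 'a set| a|"
    and fresh: "\<And>a U. |U| <o |UNIV :: 'a set| \<Longrightarrow> step a U \<inter> U = {}"
  shows "\<exists>v. disjoint_family v \<and> (\<forall>a. \<exists>U. |U| <o |UNIV :: 'a set| \<and> v a = step a U)"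
proof -
  let ?r = "|UNIV :: 'a set|"
  from exists_transfinite_recursion[of step]
  obtain v where v_rec: "\<forall>a. v a = step a (\<Union>b\<in>underS ?r a. v b)" ..
  note v = v_rec[rule_format]
  have small: "|\<Union>b\<in>underS ?r a. v b| <o ?r" for a
    by (rule card_of_UN_underS_ordLess[OF inf]) (subst v, rule size)
  have "v a \<inter> v b = {}" if "a \<noteq> b" for a b
  proof -
    have wo: "wo_rel ?r" using card_of_Well_order by (simp add: wo_rel_def)
    have "b \<in> underS ?r a \<or> a \<in> underS ?r b"
      using that wo_rel.TOTALS[OF wo] unfolding underS_def by (auto simp: Field_card_of)
    moreover have "v a \<inter> (\<Union>c\<in>underS ?r a. v c) = {}" for a
      using fresh[OF small[of a]] v[of a] by simp
    ultimately show ?thesis by blast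
  qed
  then have "disjoint_family v" unfolding disjoint_family_on_def by blast
  moreover have "\<forall>a. \<exists>U. |U| <o ?r \<and> v a = step a U" using v small by blast
  ultimately show ?thesis by blast
qed

section \<open>The partition into Bernstein sets\<close>

text \<open>A task is a colour together with either a real \<open>\<alpha>\<close>, asking for a translate of the
  initial segment below \<open>\<alpha>\<close> of the well-order \<open>|UNIV :: real set|\<close>, or a code \<open>c\<close>, asking
  for a point of \<open>branch_limits c\<close>.\<close>
type_synonym task = "real \<times> (real + (bool list \<Rightarrow> real))"

definition bernstein_step :: "(real \<Rightarrow> task) \<Rightarrow> real \<Rightarrow> real set \<Rightarrow> real set" where
  "bernstein_step task a U = (case snd (task a) of
      Inl \<alpha> \<Rightarrow>
        if (\<alpha>, a) \<in> |UNIV :: real set|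
        then (\<lambda>t. t + (SOME x. (\<lambda>t. t + x) ` underS |UNIV :: real set| \<alpha> \<inter> U = {})) `
               underS |UNIV :: real set| \<alpha>
        else {}
    | Inr c \<Rightarrow>
        if |UNIV :: real set| \<le>o |branch_limits c| then {SOME p. p \<in> branch_limits c - U} else {})"

lemma card_of_bernstein_step: "|bernstein_step task a U| \<le>o |under |UNIV :: real set| a|"
proof -
  let ?r = "|UNIV :: real set|"
  have wo: "wo_rel ?r" using card_of_Well_order by (simp add: wo_rel_def)
  have "a \<in> under ?r a" using wo_rel.REFL[OF wo] unfolding under_def refl_on_def by (auto simp: Field_card_of)
  then have singl: "|{p}| \<le>o |under ?r a|" for p :: real by (intro card_of_singl_ordLeq) blast
  have "|(\<lambda>t. t + x) ` underS ?r \<alpha>| \<le>o |under ?r a|" if "(\<alpha>, a) \<in> ?r" for \<alpha> x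
  proof -
    have "underS ?r \<alpha> \<subseteq> under ?r a"
      using that wo_rel.TRANS[OF wo] unfolding under_def underS_def trans_def by blast
    then show ?thesis by (rule ordLeq_transitive[OF card_of_image card_of_mono1])
  qed
  then show ?thesis unfolding bernstein_step_def
    using singl card_of_empty by (auto split: sum.split)
qed

lemma some_in_large_minus_small:
  assumes "|U| <o |UNIV :: 'a set|" "|UNIV :: 'a set| \<le>o |P|"
  shows "(SOME p. p \<in> P - U) \<in> P - U"
proof -
  have "\<not> P \<subseteq> U"
  proof
    assume "P \<subseteq> U"
    then have "|P| <o |UNIV :: 'a set|" by (rule ordLeq_ordLess_trans[OF card_of_mono1 assms(1)])
    then show False using assms(2) not_ordLess_ordLeq by blast
  qed
  then have "\<exists>p. p \<in> P - U" by blast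
  then show ?thesis by (rule someI_ex)
qed

lemma bernstein_step_fresh:
  assumes "|U| <o |UNIV :: real set|"
  shows "bernstein_step task a U \<inter> U = {}"
proof -
  have "\<exists>x. (\<lambda>t. t + x) ` underS |UNIV :: real set| \<alpha> \<inter> U = {}" for \<alpha>
    using exists_translate_avoiding[OF infinite_UNIV_char_0 assms]
      card_of_underS[OF card_of_Card_order, of \<alpha>] by (simp add: Field_card_of)
  then have "(\<lambda>t. t + (SOME x. (\<lambda>t. t + x) ` underS |UNIV :: real set| \<alpha> \<inter> U = {})) `
      underS |UNIV :: real set| \<alpha> \<inter> U = {}" for \<alpha>
    by (rule someI_ex)
  then show ?thesis unfolding bernstein_step_def
    using some_in_large_minus_small[OF assms] by (auto split: sum.split)
qed

lemma bernstein_step_meets: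
  assumes "|U| <o |UNIV :: real set|" "snd (task a) = Inr c" "|UNIV :: real set| \<le>o |branch_limits c|"
  shows "bernstein_step task a U \<inter> branch_limits c \<noteq> {}"
  using assms some_in_large_minus_small[OF assms(1,3)] unfolding bernstein_step_def by auto

lemma bernstein_step_covers:
  assumes "snd (task a) = Inl \<alpha>" "(\<alpha>, a) \<in> |UNIV :: real set|"
  shows "\<exists>x. (\<lambda>t. t + x) ` underS |UNIV :: real set| \<alpha> \<subseteq> bernstein_step task a U"
  using assms unfolding bernstein_step_def by auto

lemma card_of_task_le_real: "|UNIV :: task set| \<le>o |UNIV :: real set|"
proof -
  have inf: "\<not> finite (Field |UNIV :: real set| )" by (simp add: Field_card_of infinite_UNIV_char_0)
  have "|(UNIV :: real set) <+> (UNIV :: (bool list \<Rightarrow> real) set)| \<le>o |UNIV :: real set|"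
    using card_of_Plus_ordLeq_infinite_Field[OF inf ordLeq_refl[OF card_of_Card_order]
        card_of_codes_le_real card_of_Card_order] .
  then have plus: "|UNIV :: (real + (bool list \<Rightarrow> real)) set| \<le>o |UNIV :: real set|"
    by (simp only: UNIV_Plus_UNIV)
  show ?thesis
    using card_of_Times_ordLeq_infinite_Field[OF inf ordLeq_refl[OF card_of_Card_order] plus
        card_of_Card_order]
    by (simp only: UNIV_Times_UNIV)
qed

lemma exists_bernstein_family:
  "\<exists>(v :: real \<Rightarrow> real set) (colour :: real \<Rightarrow> real). disjoint_family v \<and>
     (\<forall>\<xi> Z. Z \<in> sets borel \<longrightarrow> uncountable Z \<longrightarrow> (\<exists>a. colour a = \<xi> \<and> v a \<inter> Z \<noteq> {})) \<and>
     (\<forall>\<xi> X. less_cf_continuum X \<longrightarrow> (\<exists>a x. colour a = \<xi> \<and> (\<lambda>b. b + x) ` X \<subseteq> v a))"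
proof -
  let ?r = "|UNIV :: real set|"
  obtain task :: "real \<Rightarrow> task" where fibres: "\<And>t. ?r \<le>o |task -` {t}|"
    using exists_map_with_large_fibres[OF infinite_UNIV_char_0 card_of_task_le_real] by blast
  obtain v where "disjoint_family v" and v: "\<And>a. \<exists>U. |U| <o ?r \<and> v a = bernstein_step task a U"
    using transfinite_disjoint_choice[of "bernstein_step task", OF infinite_UNIV_char_0
        card_of_bernstein_step bernstein_step_fresh] by blast
  have meets: "\<exists>a. fst (task a) = \<xi> \<and> v a \<inter> Z \<noteq> {}"
    if Z: "Z \<in> sets borel" "uncountable Z" for \<xi> Z
  proof -
    obtain c where c: "|UNIV :: (nat \<Rightarrow> bool) set| \<le>o |branch_limits c|" "branch_limits c \<subseteq> Z"
      using borel_uncountable_contains_branch_limits[OF Z] by blast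
    have big: "?r \<le>o |branch_limits c|" by (rule ordLeq_transitive[OF card_of_real_le_Cantor c(1)])
    obtain a where a: "task a = (\<xi>, Inr c)"
      using large_set_unbounded[OF fibres[of "(\<xi>, Inr c)"]] by auto
    obtain U where "|U| <o ?r" "v a = bernstein_step task a U" using v by blast
    then have "v a \<inter> branch_limits c \<noteq> {}" using bernstein_step_meets[OF _ _ big] a by simp
    then show ?thesis using a c(2) by (intro exI[of _ a]) auto
  qed
  have covers: "\<exists>a x. fst (task a) = \<xi> \<and> (\<lambda>b. b + x) ` X \<subseteq> v a"
    if "less_cf_continuum X" for \<xi> X
  proof -
    have "\<not> cofinal X ?r" using that ordLess_irreflexive unfolding less_cf_continuum_def by blast
    then obtain \<alpha> where \<alpha>: "X \<subseteq> underS ?r \<alpha>"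
      using not_cofinal_imp_bounded[OF infinite_UNIV_char_0] by blast
    obtain a where a: "task a = (\<xi>, Inl \<alpha>)" "(\<alpha>, a) \<in> ?r"
      using large_set_unbounded[OF fibres[of "(\<xi>, Inl \<alpha>)"], of \<alpha>] by auto
    obtain U where U: "v a = bernstein_step task a U" using v by blast
    obtain x where "(\<lambda>t. t + x) ` underS ?r \<alpha> \<subseteq> bernstein_step task a U"
      using bernstein_step_covers[of task a, OF _ a(2), of U] a(1) by auto
    then have "(\<lambda>b. b + x) ` X \<subseteq> v a" using \<alpha> U by blast
    then show ?thesis using a(1) by (intro exI[of _ a] exI[of _ x]) simp
  qed
  show ?thesis
    using \<open>disjoint_family v\<close> meets covers by (intro exI[of _ v] exI[of _ "fst \<circ> task"]) auto
qed

lemma disjoint_family_merge: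
  fixes v :: "'a \<Rightarrow> 'b set" and colour :: "'a \<Rightarrow> 'i"
  assumes "disjoint_family v"
  shows "\<exists>B. (\<forall>i j. i \<noteq> j \<longrightarrow> B i \<inter> B j = {}) \<and> (\<Union>i. B i) = UNIV \<and> (\<forall>a. v a \<subseteq> B (colour a))"
proof -
  define B where
    "B i = (\<Union>a\<in>colour -` {i}. v a) \<union> (if i = undefined then - (\<Union>a. v a) else {})" for i
  have "B i \<inter> B j = {}" if "i \<noteq> j" for i j
  proof (intro equals0I)
    fix x assume x: "x \<in> B i \<inter> B j"
    show False
    proof (cases "x \<in> (\<Union>a. v a)")
      case True
      then obtain a where a: "x \<in> v a" by blast
      have key: "colour b = colour a" if "x \<in> v b" for b
      proof (rule ccontr)
        assume "colour b \<noteq> colour a"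
        then have "v b \<inter> v a = {}" by (intro disjoint_family_onD[OF assms]) auto
        then show False using that a by blast
      qed
      have "k = colour a" if "x \<in> B k" for k
        using that True key unfolding B_def by (auto split: if_splits)
      then show False using x \<open>i \<noteq> j\<close> by blast
    next
      case False
      then show False using x \<open>i \<noteq> j\<close> unfolding B_def by (auto split: if_splits)
    qed
  qed
  moreover have sub: "v a \<subseteq> B (colour a)" for a unfolding B_def by blast
  moreover have "(\<Union>i. B i) = UNIV"
  proof (intro set_eqI iffI UNIV_I)
    fix x show "x \<in> (\<Union>i. B i)"
    proof (cases "x \<in> (\<Union>a. v a)")
      case True
      then show ?thesis using sub by blast
    next
      case False
      then have "x \<in> B undefined" unfolding B_def by simp
      then show ?thesis by blast
    qed
  qed
  ultimately show ?thesis by blast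
qed

lemma Bernstein_partition_class:
  assumes "i \<noteq> j" "B i \<inter> B j = {}"
    and meets: "\<And>k Z. Z \<in> sets borel \<Longrightarrow> uncountable Z \<Longrightarrow> Z \<inter> B k \<noteq> {}"
  shows "Bernstein (B i)"
  unfolding Bernstein_def using meets[of _ i] meets[of _ j] assms(2) by blast

lemma exists_covering_partition:
  "\<exists>B :: real \<Rightarrow> real set. (\<forall>i j. i \<noteq> j \<longrightarrow> B i \<inter> B j = {}) \<and> (\<Union>i. B i) = UNIV \<and>
     (\<forall>\<xi> Z. Z \<in> sets borel \<longrightarrow> uncountable Z \<longrightarrow> Z \<inter> B \<xi> \<noteq> {}) \<and> (\<forall>\<xi>. lt_covering_cf_c (B \<xi>))"
proof -
  obtain v :: "real \<Rightarrow> real set" and colour :: "real \<Rightarrow> real" where "disjoint_family v"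
    and meets: "\<forall>\<xi> Z. Z \<in> sets borel \<longrightarrow> uncountable Z \<longrightarrow> (\<exists>a. colour a = \<xi> \<and> v a \<inter> Z \<noteq> {})"
    and covers: "\<forall>\<xi> X. less_cf_continuum X \<longrightarrow> (\<exists>a x. colour a = \<xi> \<and> (\<lambda>b. b + x) ` X \<subseteq> v a)"
    using exists_bernstein_family by (elim exE conjE)
  obtain B :: "real \<Rightarrow> real set" where disj: "\<forall>i j. i \<noteq> j \<longrightarrow> B i \<inter> B j = {}"
    and cover: "(\<Union>i. B i) = UNIV" and sub: "\<forall>a. v a \<subseteq> B (colour a)"
    using disjoint_family_merge[OF \<open>disjoint_family v\<close>, of colour] by blast
  have "Z \<inter> B \<xi> \<noteq> {}" if Z: "Z \<in> sets borel" "uncountable Z" for \<xi> Z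
  proof -
    from meets[rule_format, of Z \<xi>, OF Z] obtain a where "colour a = \<xi>" "v a \<inter> Z \<noteq> {}"
      by (elim exE conjE)
    then show ?thesis using sub by blast
  qed
  moreover have "lt_covering_cf_c (B \<xi>)" for \<xi>
    unfolding lt_covering_cf_c_def
  proof (intro allI impI)
    fix X assume "less_cf_continuum X"
    from covers[rule_format, OF this, of \<xi>] obtain a x
      where "colour a = \<xi>" "(\<lambda>b. b + x) ` X \<subseteq> v a" by (elim exE conjE)
    then show "\<exists>x. (\<lambda>b. b + x) ` X \<subseteq> B \<xi>" using sub by blast
  qed
  ultimately show ?thesis using disj cover by (intro exI[of _ B] conjI) blast+
qed

theorem mainTheorem6:
  "\<exists>(I :: real set) (B :: real \<Rightarrow> real set).
     (card_of I, card_of (UNIV :: real set)) \<in> ordIso \<and>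
     (\<forall>i\<in>I. \<forall>j\<in>I. i \<noteq> j \<longrightarrow> B i \<inter> B j = {}) \<and>
     (\<Union>i\<in>I. B i) = UNIV \<and>
     (\<forall>i\<in>I. Bernstein (B i) \<and> lt_covering_cf_c (B i))"
proof -
  obtain B :: "real \<Rightarrow> real set" where disj: "\<forall>i j. i \<noteq> j \<longrightarrow> B i \<inter> B j = {}"
    and cover: "(\<Union>i. B i) = UNIV"
    and meets: "\<forall>\<xi> Z. Z \<in> sets borel \<longrightarrow> uncountable Z \<longrightarrow> Z \<inter> B \<xi> \<noteq> {}"
    and covering: "\<forall>\<xi>. lt_covering_cf_c (B \<xi>)"
    using exists_covering_partition by (elim exE conjE)
  have "Bernstein (B \<xi>)" for \<xi>
    using Bernstein_partition_class[of \<xi> "\<xi> + 1" B] disj meets by simp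
  then show ?thesis
    using disj cover covering
    by (intro exI[of _ UNIV] exI[of _ B]) (simp add: ordIso_refl card_of_Card_order)
qed

end
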